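(* For every bracket pattern $w$, $A(A(w))=A(w)$. In particular $\langle\!\langle A(w)\rangle\!\rangle=\langle\!\langle w\rangle\!\rangle$.
   Context: $\mathbb N=\{1,2,\dots\}$, $\mathbb N_0=\mathbb N\cup\{0\}$. A bracket pattern is a non-empty finite subset $w\subseteq\mathbb N$; $\|w\|:=\max(w)$. For bracket patterns $w,w'$: superposition $w\cup w'$; for $j\in w$ the projection $\cap_j w:=\{i\in w\mid i\le j\}$; the dual $w^\dagger:=\{\|w\|-i\mid i\in\mathbb N_0,\ i<\|w\|,\ i\notin w\}$. A bracket pattern category is a set of bracket patterns closed under superposition, duals and projections; $\langle\!\langle w\rangle\!\rangle$ denotes the smallest bracket pattern category containing $w$. The completion of a bracket pattern $w$ is $A(w):=\{j-i\mid j\in w,\ i\in\mathbb N_0,\ i\notin w,\ i<j\}$ (itself a bracket pattern). *)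

theory Defs
  imports Main
begin

definition bracket_pattern :: "nat set \<Rightarrow> bool" where
  "bracket_pattern w \<longleftrightarrow> finite w \<and> w \<noteq> {} \<and> 0 \<notin> w"

definition bp_norm :: "nat set \<Rightarrow> nat" where
  "bp_norm w = Max w"

definition bp_proj :: "nat \<Rightarrow> nat set \<Rightarrow> nat set" where
  "bp_proj j w = {i \<in> w. i \<le> j}"

definition bp_dual :: "nat set \<Rightarrow> nat set" where
  "bp_dual w = {bp_norm w - i | i. i < bp_norm w \<and> i \<notin> w}"

definition bp_category :: "nat set set \<Rightarrow> bool" where
  "bp_category C \<longleftrightarrow>
     (\<forall>w\<in>C. bracket_pattern w) \<and>
     (\<forall>w\<in>C. \<forall>w'\<in>C. w \<union> w' \<in> C) \<and>
     (\<forall>w\<in>C. bp_dual w \<in> C) \<and>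
     (\<forall>w\<in>C. \<forall>j\<in>w. bp_proj j w \<in> C)"

definition bp_generated :: "nat set \<Rightarrow> nat set set" where
  "bp_generated w = \<Inter> {C. bp_category C \<and> w \<in> C}"

definition bp_completion :: "nat set \<Rightarrow> nat set" where
  "bp_completion w = {j - i | j i. j \<in> w \<and> i \<notin> w \<and> i < j}"

end

theory Submission
  imports Defs
begin

text \<open>
  Idempotence: if \<open>b\<close> is a gap of \<open>A(w)\<close> with \<open>b + x \<in> A(w)\<close>, witnessed by a gap \<open>i\<close> of \<open>w\<close>
  with \<open>i + b + x \<in> w\<close>, then \<open>i + b\<close> is again a gap of \<open>w\<close>, so \<open>x \<in> A(w)\<close>.

  Categories: \<open>A(w)\<close> is the union, over the gaps \<open>i < \<parallel>w\<parallel>\<close>, of the translates \<open>{x > 0. i + x \<in> w}\<close>,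
  and each translate is the dual of the projection of \<open>w\<^sup>\<dagger>\<close> at \<open>\<parallel>w\<parallel> - i\<close>. Conversely \<open>w\<close> is
  the union, over \<open>j \<in> w\<close>, of the duals of the projections of \<open>A(w)\<close> at \<open>j\<close>: such a dual contains
  \<open>j\<close>, and any \<open>x < j\<close> in it lies in \<open>w\<close>, for otherwise \<open>x\<close> would be a gap of \<open>w\<close> below \<open>j\<close>
  and \<open>j - x \<in> A(w)\<close>.
\<close>

lemma bp_norm_mem: "bracket_pattern w \<Longrightarrow> bp_norm w \<in> w"
  unfolding bracket_pattern_def bp_norm_def by simp

lemma bp_mem_le_norm: "bracket_pattern w \<Longrightarrow> x \<in> w \<Longrightarrow> x \<le> bp_norm w"
  unfolding bracket_pattern_def bp_norm_def by simp

lemma bp_mem_pos: "bracket_pattern w \<Longrightarrow> x \<in> w \<Longrightarrow> 0 < x"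
  unfolding bracket_pattern_def by (auto intro: gr0I)

lemma mem_bp_dual_iff:
  "x \<in> bp_dual u \<longleftrightarrow> 0 < x \<and> x \<le> bp_norm u \<and> bp_norm u - x \<notin> u"
proof
  assume "x \<in> bp_dual u"
  then obtain i where "x = bp_norm u - i" "i < bp_norm u" "i \<notin> u"
    unfolding bp_dual_def by auto
  then show "0 < x \<and> x \<le> bp_norm u \<and> bp_norm u - x \<notin> u"
    by (simp add: diff_diff_cancel)
next
  assume "0 < x \<and> x \<le> bp_norm u \<and> bp_norm u - x \<notin> u"
  then show "x \<in> bp_dual u"
    unfolding bp_dual_def by (auto intro!: exI[of _ "bp_norm u - x"])
qed

lemma bp_norm_mem_bp_dual: "bracket_pattern u \<Longrightarrow> bp_norm u \<in> bp_dual u"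
  using bp_norm_mem bp_mem_pos unfolding bracket_pattern_def mem_bp_dual_iff by fastforce

lemma
  assumes "bracket_pattern u"
  shows bracket_pattern_bp_dual: "bracket_pattern (bp_dual u)"
    and bp_norm_bp_dual: "bp_norm (bp_dual u) = bp_norm u"
proof -
  have sub: "bp_dual u \<subseteq> {1..bp_norm u}"
    by (auto simp: mem_bp_dual_iff)
  then show "bracket_pattern (bp_dual u)"
    using bp_norm_mem_bp_dual[OF assms] unfolding bracket_pattern_def
    by (auto intro: finite_subset)
  show "bp_norm (bp_dual u) = bp_norm u"
    unfolding bp_norm_def[of "bp_dual u"]
    using sub bp_norm_mem_bp_dual[OF assms] by (intro Max_eqI) (auto intro: finite_subset)
qed

lemma
  assumes "bracket_pattern u" and "j \<in> u"
  shows bracket_pattern_bp_proj: "bracket_pattern (bp_proj j u)"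
    and bp_norm_bp_proj: "bp_norm (bp_proj j u) = j"
proof -
  have "finite (bp_proj j u)" "j \<in> bp_proj j u"
    using assms unfolding bracket_pattern_def bp_proj_def by auto
  then show "bracket_pattern (bp_proj j u)" "bp_norm (bp_proj j u) = j"
    using assms(1) unfolding bracket_pattern_def bp_norm_def bp_proj_def
    by (auto intro: Max_eqI)
qed

lemma mem_bp_dual_proj_iff:
  assumes "bracket_pattern u" and "j \<in> u"
  shows "x \<in> bp_dual (bp_proj j u) \<longleftrightarrow> 0 < x \<and> x \<le> j \<and> j - x \<notin> u"
proof -
  have "x \<le> j \<Longrightarrow> j - x \<in> bp_proj j u \<longleftrightarrow> j - x \<in> u"
    unfolding bp_proj_def by simp
  then show ?thesis
    by (auto simp: mem_bp_dual_iff bp_norm_bp_proj[OF assms])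
qed

lemma mem_bp_completion_iff:
  "x \<in> bp_completion w \<longleftrightarrow> (\<exists>i. i \<notin> w \<and> 0 < x \<and> i + x \<in> w)"
proof
  assume "x \<in> bp_completion w"
  then show "\<exists>i. i \<notin> w \<and> 0 < x \<and> i + x \<in> w"
    unfolding bp_completion_def by auto
next
  assume "\<exists>i. i \<notin> w \<and> 0 < x \<and> i + x \<in> w"
  then obtain i where "i \<notin> w" "0 < x" "i + x \<in> w" by blast
  then have "x = (i + x) - i \<and> i + x \<in> w \<and> i \<notin> w \<and> i < i + x"
    by simp
  then show "x \<in> bp_completion w"
    unfolding bp_completion_def by blast
qed

lemma bp_completion_memI: "i \<notin> w \<Longrightarrow> 0 < x \<Longrightarrow> i + x \<in> w \<Longrightarrow> x \<in> bp_completion w"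
  by (auto simp: mem_bp_completion_iff)

lemma subset_bp_completion: "0 \<notin> w \<Longrightarrow> w \<subseteq> bp_completion w"
  by (auto intro: bp_completion_memI[of 0] gr0I)

lemma bp_mem_bp_completion: "bracket_pattern w \<Longrightarrow> j \<in> w \<Longrightarrow> j \<in> bp_completion w"
  using subset_bp_completion unfolding bracket_pattern_def by blast

lemma bp_completion_idem: "bp_completion (bp_completion w) = bp_completion w"
proof
  show "bp_completion (bp_completion w) \<subseteq> bp_completion w"
  proof
    fix x assume "x \<in> bp_completion (bp_completion w)"
    then obtain b where b: "b \<notin> bp_completion w" "0 < x" "b + x \<in> bp_completion w"
      by (auto simp: mem_bp_completion_iff)
    then obtain i where i: "i \<notin> w" "i + (b + x) \<in> w"
      by (auto simp: mem_bp_completion_iff)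
    show "x \<in> bp_completion w"
    proof (cases "b = 0")
      case True
      then show ?thesis using b by simp
    next
      case False
      then have "i + b \<notin> w"
        using b(1) i(1) by (auto intro: bp_completion_memI)
      then show ?thesis
        using i(2) b(2) by (auto intro: bp_completion_memI simp: add.assoc)
    qed
  qed
  show "bp_completion w \<subseteq> bp_completion (bp_completion w)"
    by (rule subset_bp_completion) (simp add: mem_bp_completion_iff)
qed

lemma bracket_pattern_bp_completion:
  assumes w: "bracket_pattern w"
  shows "bracket_pattern (bp_completion w)"
proof -
  have "bp_completion w \<subseteq> {1..bp_norm w}"
  proof
    fix x assume "x \<in> bp_completion w"
    then obtain i where "0 < x" "i + x \<in> w"
      by (auto simp: mem_bp_completion_iff)
    then show "x \<in> {1..bp_norm w}"
      using bp_mem_le_norm[OF w, of "i + x"] by simp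
  qed
  moreover have "w \<subseteq> bp_completion w" "w \<noteq> {}"
    using w bp_mem_bp_completion unfolding bracket_pattern_def by auto
  ultimately show ?thesis
    unfolding bracket_pattern_def by (auto intro: finite_subset)
qed

lemma bp_completion_eq_UN_translates:
  assumes w: "bracket_pattern w"
  shows "bp_completion w = (\<Union>i\<in>{i. i < bp_norm w \<and> i \<notin> w}. {x. 0 < x \<and> i + x \<in> w})"
proof (intro equalityI subsetI)
  fix x assume "x \<in> bp_completion w"
  then obtain i where i: "i \<notin> w" "0 < x" "i + x \<in> w"
    by (auto simp: mem_bp_completion_iff)
  moreover have "i < bp_norm w"
    using i bp_mem_le_norm[OF w, of "i + x"] by simp
  ultimately show "x \<in> (\<Union>i\<in>{i. i < bp_norm w \<and> i \<notin> w}. {x. 0 < x \<and> i + x \<in> w})"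
    by blast
qed (auto intro: bp_completion_memI)

lemma bp_dual_proj_dual_eq_translate:
  assumes w: "bracket_pattern w" and i: "i \<notin> w" "i < bp_norm w"
  shows "bp_dual (bp_proj (bp_norm w - i) (bp_dual w)) = {x. 0 < x \<and> i + x \<in> w}"
proof (intro set_eqI)
  fix x
  define n where "n = bp_norm w"
  have "n - i \<in> bp_dual w"
    using i by (simp add: mem_bp_dual_iff n_def)
  then have "x \<in> bp_dual (bp_proj (n - i) (bp_dual w))
      \<longleftrightarrow> 0 < x \<and> x \<le> n - i \<and> n - i - x \<notin> bp_dual w"
    by (simp add: mem_bp_dual_proj_iff bracket_pattern_bp_dual w)
  also have "\<dots> \<longleftrightarrow> 0 < x \<and> x \<le> n - i \<and> (x = n - i \<or> i + x \<in> w)"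
    using i(2) by (auto simp: mem_bp_dual_iff bp_norm_bp_dual[OF w] n_def)
  also have "\<dots> \<longleftrightarrow> 0 < x \<and> i + x \<in> w"
    using i(2) bp_norm_mem[OF w] bp_mem_le_norm[OF w, of "i + x"]
    by (auto simp: n_def)
  finally show "x \<in> bp_dual (bp_proj (bp_norm w - i) (bp_dual w))
      \<longleftrightarrow> x \<in> {x. 0 < x \<and> i + x \<in> w}"
    by (simp add: n_def)
qed

lemma bp_dual_proj_completion_subset:
  assumes v: "bracket_pattern v" and j: "j \<in> v"
  shows "bp_dual (bp_proj j (bp_completion v)) \<subseteq> v"
proof
  fix x assume x: "x \<in> bp_dual (bp_proj j (bp_completion v))"
  have "j \<in> bp_completion v"
    using v j by (rule bp_mem_bp_completion)
  with x have x': "0 < x" "x \<le> j" "j - x \<notin> bp_completion v"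
    by (simp_all add: mem_bp_dual_proj_iff bracket_pattern_bp_completion v)
  show "x \<in> v"
  proof (rule ccontr)
    assume "x \<notin> v"
    then have "x < j" using j x'(2) by (cases "x = j") auto
    then have "j - x \<in> bp_completion v"
      using \<open>x \<notin> v\<close> j by (intro bp_completion_memI[of x]) simp_all
    with x'(3) show False by contradiction
  qed
qed

lemma bp_eq_UN_dual_proj_completion:
  assumes v: "bracket_pattern v"
  shows "v = (\<Union>j\<in>v. bp_dual (bp_proj j (bp_completion v)))"
proof (intro equalityI subsetI)
  fix j assume j: "j \<in> v"
  have "j \<in> bp_completion v"
    using v j by (rule bp_mem_bp_completion)
  then have "j \<in> bp_dual (bp_proj j (bp_completion v))"
    using bp_norm_mem_bp_dual bracket_pattern_bp_proj bp_norm_bp_proj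
      bracket_pattern_bp_completion[OF v] by metis
  with j show "j \<in> (\<Union>j\<in>v. bp_dual (bp_proj j (bp_completion v)))" by blast
qed (use bp_dual_proj_completion_subset[OF v] in blast)

lemma bp_category_UN:
  assumes C: "bp_category C" and "finite I" "I \<noteq> {}" "\<And>i. i \<in> I \<Longrightarrow> f i \<in> C"
  shows "(\<Union>i\<in>I. f i) \<in> C"
  using assms(2-4)
proof (induction I rule: finite_ne_induct)
  case (insert i I)
  then show ?case using C unfolding bp_category_def by simp
qed simp

lemma bp_completion_mem_bp_category:
  assumes C: "bp_category C" and w: "w \<in> C"
  shows "bp_completion w \<in> C"
proof -
  have bp: "bracket_pattern w"
    using C w unfolding bp_category_def by blast
  have "0 \<in> {i. i < bp_norm w \<and> i \<notin> w}"
    using bp bp_mem_pos[OF bp] bp_norm_mem[OF bp] by blast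
  moreover have "bp_dual (bp_proj (bp_norm w - i) (bp_dual w)) \<in> C"
    if "i < bp_norm w" "i \<notin> w" for i
  proof -
    have "bp_norm w - i \<in> bp_dual w"
      using that by (simp add: mem_bp_dual_iff)
    then show ?thesis
      using C w unfolding bp_category_def by blast
  qed
  ultimately show ?thesis
    unfolding bp_completion_eq_UN_translates[OF bp]
    by (intro bp_category_UN[OF C]) (auto simp: bp_dual_proj_dual_eq_translate[OF bp, symmetric])
qed

lemma bp_mem_bp_category_of_completion_mem:
  assumes C: "bp_category C" and v: "bracket_pattern v" and "bp_completion v \<in> C"
  shows "v \<in> C"
proof -
  have "bp_dual (bp_proj j (bp_completion v)) \<in> C" if "j \<in> v" for j
  proof -
    have "j \<in> bp_completion v"
      using v that by (rule bp_mem_bp_completion)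
    then show ?thesis
      using C \<open>bp_completion v \<in> C\<close> unfolding bp_category_def by blast
  qed
  moreover have "finite v" "v \<noteq> {}"
    using v unfolding bracket_pattern_def by auto
  ultimately show ?thesis
    by (subst bp_eq_UN_dual_proj_completion[OF v]) (rule bp_category_UN[OF C])
qed

theorem lemma7p12:
  assumes "bracket_pattern w"
  shows "bp_completion (bp_completion w) = bp_completion w
         \<and> bp_generated (bp_completion w) = bp_generated w"
proof
  show "bp_completion (bp_completion w) = bp_completion w"
    by (rule bp_completion_idem)
  have "bp_completion w \<in> C \<longleftrightarrow> w \<in> C" if "bp_category C" for C
    using bp_completion_mem_bp_category bp_mem_bp_category_of_completion_mem assms that by blast
  then show "bp_generated (bp_completion w) = bp_generated w"
    unfolding bp_generated_def by (simp cong: conj_cong)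
qed

end
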